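(* Let $G$ be a compact abelian group with Haar probability $m_G$, $d$ a translation-invariant metric on $G$, and $T_gx=x+g$ an ergodic rotation. The graph joinings $\lambda_h=(x\mapsto(x,x+h))_\#m_G$, $h\in G$, all lie in one coordinate-isomorphism class, and $\Phi_{n,m}(\lambda_h)=\Phi_{n,m}(\lambda_{h'})$ for all $h,h'\in G$ and all $n,m\ge1$. Moreover, if $d(X_1,X_2)$ is non-degenerate (not a.s. constant) for independent Haar-distributed $X_1,X_2$, then $\Phi_{2,1}(\lambda_h)\ne\Phi_{2,1}(m_G\otimes m_G)$.
   Context: For $z_i=(x_i,y_i)\in G\times G$, $\mathcal D^X_{n,m}=(d(T_g^ax_i,T_g^bx_j))_{1\le i,j\le n,0\le a,b<m}$, $\mathcal D^Y_{n,m}=(d(T_g^ay_i,T_g^by_j))_{1\le i,j\le n,0\le a,b<m}$, $\Phi_{n,m}(\lambda)=\mathrm{Law}_{\lambda^{\otimes n}}(\mathcal D^X_{n,m},\mathcal D^Y_{n,m})$. $\mathrm{Aut}_{\rm md}$ of $(G,d,m_G,T_g)$ is the group of measure-space automorphisms $A$ of $(G,m_G)$ commuting with $T_g$ modulo null sets and with $d(Ax,Ax')=d(x,x')$ for $m_G\otimes m_G$-a.e. $(x,x')$. Two self-joinings $\lambda,\lambda'$ are coordinate-isomorphic if $\lambda'=(A\times B)_\#\lambda$ for some $A,B\in\mathrm{Aut}_{\rm md}$. *)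

theory Defs
  imports "HOL-Probability.Probability"
begin

definition is_metric :: "('a \<Rightarrow> 'a \<Rightarrow> real) \<Rightarrow> bool" where
  "is_metric d \<longleftrightarrow> (\<forall>x y. d x y = 0 \<longleftrightarrow> x = y) \<and> (\<forall>x y. d x y = d y x)
     \<and> (\<forall>x y z. d x z \<le> d x y + d y z)"

definition translation_invariant :: "('a::ab_group_add \<Rightarrow> 'a \<Rightarrow> real) \<Rightarrow> bool" where
  "translation_invariant d \<longleftrightarrow> (\<forall>x y g. d (x + g) (y + g) = d x y)"

definition compact_ab_topgroup :: "'a::{ab_group_add,t2_space} itself \<Rightarrow> bool" where
  "compact_ab_topgroup TYPE('a) \<longleftrightarrow> compact (UNIV :: 'a set)
     \<and> continuous_on UNIV (\<lambda>p::'a \<times> 'a. fst p + snd p)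
     \<and> continuous_on UNIV (uminus :: 'a \<Rightarrow> 'a)"

definition haar_probability :: "'a::{ab_group_add,topological_space} measure \<Rightarrow> bool" where
  "haar_probability M \<longleftrightarrow> sets M = sets borel \<and> prob_space M
     \<and> (\<forall>g. distr M M (\<lambda>x. x + g) = M)"

definition ergodic_map :: "'a measure \<Rightarrow> ('a \<Rightarrow> 'a) \<Rightarrow> bool" where
  "ergodic_map M T \<longleftrightarrow> T \<in> M \<rightarrow>\<^sub>M M \<and> distr M M T = M \<and>
     (\<forall>A \<in> sets M. T -` A \<inter> space M = A \<longrightarrow> emeasure M A = 0 \<or> emeasure M A = 1)"

definition rot :: "'a::ab_group_add \<Rightarrow> 'a \<Rightarrow> 'a" where
  "rot g x = x + g"

definition graph_joining :: "'a::ab_group_add measure \<Rightarrow> 'a \<Rightarrow> ('a \<times> 'a) measure" where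
  "graph_joining M h = distr M (M \<Otimes>\<^sub>M M) (\<lambda>x. (x, x + h))"

definition Aut_md :: "'a measure \<Rightarrow> ('a \<Rightarrow> 'a \<Rightarrow> real) \<Rightarrow> ('a \<Rightarrow> 'a) \<Rightarrow> ('a \<Rightarrow> 'a) set" where
  "Aut_md M d T = {A. A \<in> M \<rightarrow>\<^sub>M M \<and> distr M M A = M
     \<and> (\<exists>B \<in> M \<rightarrow>\<^sub>M M. (AE x in M. B (A x) = x) \<and> (AE x in M. A (B x) = x))
     \<and> (AE x in M. A (T x) = T (A x))
     \<and> (AE p in M \<Otimes>\<^sub>M M. d (A (fst p)) (A (snd p)) = d (fst p) (snd p))}"

definition coord_isomorphic ::
  "'a measure \<Rightarrow> ('a \<Rightarrow> 'a \<Rightarrow> real) \<Rightarrow> ('a \<Rightarrow> 'a) \<Rightarrow> ('a \<times> 'a) measure \<Rightarrow> ('a \<times> 'a) measure \<Rightarrow> bool" where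
  "coord_isomorphic M d T L L' \<longleftrightarrow>
     (\<exists>A \<in> Aut_md M d T. \<exists>B \<in> Aut_md M d T. L' = distr L (M \<Otimes>\<^sub>M M) (\<lambda>(x, y). (A x, B y)))"

definition idx :: "nat \<Rightarrow> nat \<Rightarrow> ((nat \<times> nat) \<times> (nat \<times> nat)) set" where
  "idx n m = ({1..n} \<times> {..<m}) \<times> ({1..n} \<times> {..<m})"

definition Dmat :: "('a \<Rightarrow> 'a \<Rightarrow> real) \<Rightarrow> ('a \<Rightarrow> 'a) \<Rightarrow> nat \<Rightarrow> nat \<Rightarrow> (nat \<Rightarrow> 'a)
    \<Rightarrow> ((nat \<times> nat) \<times> (nat \<times> nat) \<Rightarrow> real)" where
  "Dmat d T n m x = restrict (\<lambda>((i, a), (j, b)). d ((T ^^ a) (x i)) ((T ^^ b) (x j))) (idx n m)"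

definition Phi :: "('a \<Rightarrow> 'a \<Rightarrow> real) \<Rightarrow> ('a \<Rightarrow> 'a) \<Rightarrow> nat \<Rightarrow> nat \<Rightarrow> ('a \<times> 'a) measure
    \<Rightarrow> (((nat \<times> nat) \<times> (nat \<times> nat) \<Rightarrow> real) \<times> ((nat \<times> nat) \<times> (nat \<times> nat) \<Rightarrow> real)) measure" where
  "Phi d T n m L = distr (PiM {1..n} (\<lambda>_. L))
     (PiM (idx n m) (\<lambda>_. borel) \<Otimes>\<^sub>M PiM (idx n m) (\<lambda>_. borel))
     (\<lambda>z. (Dmat d T n m (\<lambda>i. fst (z i)), Dmat d T n m (\<lambda>i. snd (z i))))"

end

theory Submission
  imports Defs
begin

text \<open>
  Translating the second coordinate by \<open>h' - h\<close> is a
  metric-preserving automorphism commuting with the rotation and carries \<open>\<lambda>\<^sub>h\<close> to \<open>\<lambda>\<^sub>h\<^sub>'\<close>. Because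
  the rotation commutes with translations and \<open>d\<close> is invariant, under \<open>\<lambda>\<^sub>h\<^sup>n\<close> the distance matrix
  of the second coordinates equals that of the first ones, so \<open>\<Phi>\<^sub>n\<^sub>,\<^sub>m(\<lambda>\<^sub>h)\<close> is the law of a
  diagonal pair \<open>(D, D)\<close> for every \<open>h\<close>. Under the product joining, \<open>d(X\<^sub>1, X\<^sub>2)\<close> and
  \<open>d(Y\<^sub>1, Y\<^sub>2)\<close> are independent; if they agreed almost surely, Fubini would make \<open>d(x, \<cdot>)\<close>
  almost surely constant for some \<open>x\<close>, and then translation invariance would make \<open>d(X\<^sub>1, X\<^sub>2)\<close>
  almost surely constant.
\<close>

lemma (in prob_space) AE_PiM_pair_components:
  assumes "i \<noteq> j" and ae: "AE z in PiM {i, j} (\<lambda>_. M). P (z i) (z j)"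
  shows "AE x in M. AE y in M. P x y"
proof -
  have product: "product_sigma_finite (\<lambda>_. M)"
    unfolding product_sigma_finite_def using sigma_finite_measure_axioms by simp
  have pair: "pair_sigma_finite M (PiM {j} (\<lambda>_. M))"
    using sigma_finite_measure_axioms prob_space_imp_sigma_finite[OF prob_space_PiM[OF prob_space_axioms]]
    by (simp add: pair_sigma_finite_def)
  have upd_distr: "distr (M \<Otimes>\<^sub>M PiM {j} (\<lambda>_. M)) (PiM {i, j} (\<lambda>_. M)) (\<lambda>(x, X). X(i := x))
      = PiM {i, j} (\<lambda>_. M)"
    by (rule distr_pair_PiM_eq_PiM) (simp_all add: prob_space_axioms)
  have upd_measurable: "(\<lambda>(x, X). X(i := x)) \<in> M \<Otimes>\<^sub>M PiM {j} (\<lambda>_. M) \<rightarrow>\<^sub>M PiM {i, j} (\<lambda>_. M)"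
    using measurable_fun_upd[where J="{j}" and I="{i, j}" and i=i] by (simp add: case_prod_beta')
  have "AE w in M \<Otimes>\<^sub>M PiM {j} (\<lambda>_. M).
      P (((\<lambda>(x, X). X(i := x)) w) i) (((\<lambda>(x, X). X(i := x)) w) j)"
    by (rule AE_distrD[OF upd_measurable]) (simp only: upd_distr ae)
  then have "AE w in M \<Otimes>\<^sub>M PiM {j} (\<lambda>_. M). P (fst w) (snd w j)"
    using \<open>i \<noteq> j\<close> by (simp add: case_prod_beta')
  then have "AE x in M. AE X in PiM {j} (\<lambda>_. M). P x (X j)"
    using pair_sigma_finite.AE_pair[OF pair] by fastforce
  moreover have "AE y in M. Q y" if "AE X in PiM {j} (\<lambda>_. M). Q (X j)" for Q
  proof -
    have embed: "(\<lambda>y. \<lambda>i\<in>{j}. y) \<in> M \<rightarrow>\<^sub>M PiM {j} (\<lambda>_. M)"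
      by (rule measurable_restrict) simp
    have "AE X in distr M (PiM {j} (\<lambda>_. M)) (\<lambda>y. \<lambda>i\<in>{j}. y). Q (X j)"
      by (simp only: product_sigma_finite.distr_component[OF product] that)
    from AE_distrD[OF embed this] show ?thesis
      by simp
  qed
  ultimately show ?thesis
    by (simp add: eventually_mono)
qed

lemma funpow_rot_add: "(rot g ^^ a) (x + c) = (rot g ^^ a) x + c"
  by (induction a) (simp_all add: rot_def algebra_simps)

lemma Dmat_cong: "(\<And>i. i \<in> {1..n} \<Longrightarrow> x i = y i) \<Longrightarrow> Dmat d T n m x = Dmat d T n m y"
  unfolding Dmat_def idx_def by (intro restrict_ext) auto

lemma Dmat_translate:
  assumes "translation_invariant d"
  shows "Dmat d (rot g) n m (\<lambda>i. x i + c) = Dmat d (rot g) n m x"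
  using assms unfolding Dmat_def translation_invariant_def
  by (intro restrict_ext) (auto simp: funpow_rot_add)

locale invariant_haar_space = prob_space M
  for M :: "'a::ab_group_add measure" +
  fixes d :: "'a \<Rightarrow> 'a \<Rightarrow> real"
  assumes measurable_translate: "(\<lambda>x. x + t) \<in> M \<rightarrow>\<^sub>M M"
    and distr_translate: "distr M M (\<lambda>x. x + t) = M"
    and invariant_d: "translation_invariant d"
    and measurable_d: "(\<lambda>p. d (fst p) (snd p)) \<in> borel_measurable (M \<Otimes>\<^sub>M M)"
begin

sublocale MM: pair_prob_space M M
  unfolding pair_prob_space_def pair_sigma_finite_def
  using prob_space_axioms sigma_finite_measure_axioms by simp

lemma d_translate[simp]: "d (x + t) (y + t) = d x y"
  using invariant_d by (simp add: translation_invariant_def)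

lemma measurable_dist:
  assumes "f \<in> N \<rightarrow>\<^sub>M M" "h \<in> N \<rightarrow>\<^sub>M M"
  shows "(\<lambda>z. d (f z) (h z)) \<in> borel_measurable N"
  using measurable_compose[OF measurable_Pair[OF assms] measurable_d] by simp

lemma measurable_rot: "rot g \<in> M \<rightarrow>\<^sub>M M"
  unfolding rot_def[abs_def] by (rule measurable_translate)

lemma measurable_Dmat:
  assumes "\<And>i. i \<in> {1..n} \<Longrightarrow> (\<lambda>z. x z i) \<in> N \<rightarrow>\<^sub>M M"
  shows "(\<lambda>z. Dmat d (rot g) n m (x z)) \<in> N \<rightarrow>\<^sub>M PiM (idx n m) (\<lambda>_. borel)"
  unfolding Dmat_def idx_def
  by (intro measurable_restrict, clarsimp)
    (intro measurable_dist measurable_compose[OF assms measurable_compose_n[OF measurable_rot]]; simp)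

lemma measurable_Dmat_pair:
  "(\<lambda>z. (Dmat d (rot g) n m (\<lambda>i. fst (z i)), Dmat d (rot g) n m (\<lambda>i. snd (z i))))
     \<in> PiM {1..n} (\<lambda>_. M \<Otimes>\<^sub>M M) \<rightarrow>\<^sub>M PiM (idx n m) (\<lambda>_. borel) \<Otimes>\<^sub>M PiM (idx n m) (\<lambda>_. borel)"
  by (intro measurable_Pair measurable_Dmat measurable_compose[OF measurable_component_singleton]
      measurable_fst'' measurable_snd'') auto

lemma measurable_graph: "(\<lambda>x. (x, x + h)) \<in> M \<rightarrow>\<^sub>M M \<Otimes>\<^sub>M M"
  by (intro measurable_Pair measurable_ident_sets measurable_translate) auto

lemma Phi_graph_joining:
  "Phi d (rot g) n m (graph_joining M h) =
     distr (PiM {1..n} (\<lambda>_. M)) (PiM (idx n m) (\<lambda>_. borel) \<Otimes>\<^sub>M PiM (idx n m) (\<lambda>_. borel))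
       (\<lambda>x. (Dmat d (rot g) n m x, Dmat d (rot g) n m x))"
proof -
  let ?G = "compose {1..n} (\<lambda>x. (x, x + h))"
  have G: "?G \<in> PiM {1..n} (\<lambda>_. M) \<rightarrow>\<^sub>M PiM {1..n} (\<lambda>_. M \<Otimes>\<^sub>M M)"
    unfolding compose_def
    by (intro measurable_restrict measurable_compose[OF _ measurable_graph] measurable_component_singleton)
  have "PiM {1..n} (\<lambda>_. graph_joining M h) = distr (PiM {1..n} (\<lambda>_. M)) (PiM {1..n} (\<lambda>_. M \<Otimes>\<^sub>M M)) ?G"
    unfolding graph_joining_def
    by (rule distr_PiM_finite_prob_space'[symmetric])
      (simp_all add: prob_space_axioms MM.prob_space_axioms measurable_graph)
  then have "Phi d (rot g) n m (graph_joining M h) =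
      distr (PiM {1..n} (\<lambda>_. M)) (PiM (idx n m) (\<lambda>_. borel) \<Otimes>\<^sub>M PiM (idx n m) (\<lambda>_. borel))
        ((\<lambda>z. (Dmat d (rot g) n m (\<lambda>i. fst (z i)), Dmat d (rot g) n m (\<lambda>i. snd (z i)))) \<circ> ?G)"
    unfolding Phi_def by (simp only: distr_distr[OF measurable_Dmat_pair G])
  also have "\<dots> = distr (PiM {1..n} (\<lambda>_. M)) (PiM (idx n m) (\<lambda>_. borel) \<Otimes>\<^sub>M PiM (idx n m) (\<lambda>_. borel))
       (\<lambda>x. (Dmat d (rot g) n m x, Dmat d (rot g) n m (\<lambda>i. x i + h)))"
    by (intro distr_cong refl) (auto simp: compose_def intro!: Dmat_cong)
  finally show ?thesis
    by (simp only: Dmat_translate[OF invariant_d])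
qed

lemma translate_in_Aut_md: "(\<lambda>x. x + c) \<in> Aut_md M d (rot g)"
proof -
  have "\<exists>B \<in> M \<rightarrow>\<^sub>M M. (AE x in M. B (x + c) = x) \<and> (AE x in M. B x + c = x)"
    using measurable_translate[of "- c"] by (intro bexI[of _ "\<lambda>x. x + - c"]) simp_all
  moreover have "rot g x + c = rot g (x + c)" for x
    by (simp add: rot_def add.assoc add.commute)
  ultimately show ?thesis
    unfolding Aut_md_def using measurable_translate[of c] distr_translate[of c] by simp
qed

lemma graph_joining_shift:
  "graph_joining M h' = distr (graph_joining M h) (M \<Otimes>\<^sub>M M) (\<lambda>(x, y). (x, y + (h' - h)))"
proof -
  have "(\<lambda>(x, y). (x, y + (h' - h))) \<in> M \<Otimes>\<^sub>M M \<rightarrow>\<^sub>M M \<Otimes>\<^sub>M M"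
    unfolding case_prod_beta'
    by (intro measurable_Pair measurable_fst measurable_compose[OF measurable_snd measurable_translate])
  then show ?thesis
    unfolding graph_joining_def
    by (simp add: distr_distr[OF _ measurable_graph] comp_def algebra_simps)
qed

lemma coord_isomorphic_graph_joinings:
  "coord_isomorphic M d (rot g) (graph_joining M h) (graph_joining M h')"
  unfolding coord_isomorphic_def
proof (intro bexI)
  show "graph_joining M h' = distr (graph_joining M h) (M \<Otimes>\<^sub>M M) (\<lambda>(x, y). (x, y + (h' - h)))"
    by (rule graph_joining_shift)
qed (use translate_in_Aut_md[of 0] translate_in_Aut_md[of "h' - h"] in simp_all)

lemma AE_dist_const_if_const_from_point:
  assumes "AE y in M. d b y = c"
  shows "AE p in M \<Otimes>\<^sub>M M. d (fst p) (snd p) = c"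
proof (rule MM.AE_pair_measure)
  show "{p \<in> space (M \<Otimes>\<^sub>M M). d (fst p) (snd p) = c} \<in> sets (M \<Otimes>\<^sub>M M)"
    using measurable_d by measurable
  have "AE y in M. d x y = c" for x
  proof -
    have "AE y in distr M M (\<lambda>y. y + (b - x)). d b y = c"
      by (simp only: distr_translate assms)
    from AE_distrD[OF measurable_translate this] show ?thesis
      using d_translate[of x "b - x"] by simp
  qed
  then show "AE x in M. AE y in M. d (fst (x, y)) (snd (x, y)) = c"
    by simp
qed

lemma not_AE_dist_eq_on_independent_pairs:
  assumes nonconst: "\<nexists>c. AE p in M \<Otimes>\<^sub>M M. d (fst p) (snd p) = c"
  shows "\<not> (AE z in PiM {1..2::nat} (\<lambda>_. M \<Otimes>\<^sub>M M). d (fst (z 1)) (fst (z 2)) = d (snd (z 1)) (snd (z 2)))"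
proof
  assume "AE z in PiM {1..2::nat} (\<lambda>_. M \<Otimes>\<^sub>M M). d (fst (z 1)) (fst (z 2)) = d (snd (z 1)) (snd (z 2))"
  moreover have "{1..2::nat} = {1, 2}"
    by auto
  ultimately have "AE z in PiM {1, 2::nat} (\<lambda>_. M \<Otimes>\<^sub>M M). d (fst (z 1)) (fst (z 2)) = d (snd (z 1)) (snd (z 2))"
    by metis
  then have "AE p in M \<Otimes>\<^sub>M M. AE q in M \<Otimes>\<^sub>M M. d (fst p) (fst q) = d (snd p) (snd q)"
    by (intro MM.AE_PiM_pair_components[of "1::nat" 2 "\<lambda>p q. d (fst p) (fst q) = d (snd p) (snd q)"]) simp_all
  then obtain p where "AE q in M \<Otimes>\<^sub>M M. d (fst p) (fst q) = d (snd p) (snd q)"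
    using eventually_happens' MM.ae_filter_bot by blast
  then have "AE x in M. AE y in M. d (fst p) x = d (snd p) y"
    using MM.AE_pair by fastforce
  then obtain x where "AE y in M. d (snd p) y = d (fst p) x"
    using eventually_happens' ae_filter_bot by (metis (mono_tags, lifting) eventually_mono)
  then show False
    using AE_dist_const_if_const_from_point nonconst by blast
qed

lemma Phi_graph_joining_neq_Phi_product:
  assumes "\<nexists>c. AE p in M \<Otimes>\<^sub>M M. d (fst p) (snd p) = c"
  shows "Phi d (rot g) 2 1 (graph_joining M h) \<noteq> Phi d (rot g) 2 1 (M \<Otimes>\<^sub>M M)"
proof
  let ?N = "PiM (idx 2 1) (\<lambda>_. borel :: real measure) \<Otimes>\<^sub>M PiM (idx 2 1) (\<lambda>_. borel :: real measure)"
  define e :: "(nat \<times> nat) \<times> (nat \<times> nat)" where "e = ((1, 0), (2, 0))"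
  have e: "e \<in> idx 2 1"
    by (simp add: e_def idx_def)
  have Dmat_e: "Dmat d (rot g) 2 1 x e = d (x 1) (x 2)" for x
    using e by (simp add: Dmat_def e_def)
  have E: "{w \<in> space ?N. fst w e = snd w e} \<in> sets ?N"
    using e by measurable
  have diagonal: "(\<lambda>x. (Dmat d (rot g) 2 1 x, Dmat d (rot g) 2 1 x)) \<in> PiM {1..2} (\<lambda>_. M) \<rightarrow>\<^sub>M ?N"
    by (intro measurable_Pair measurable_Dmat measurable_component_singleton) auto
  assume eq: "Phi d (rot g) 2 1 (graph_joining M h) = Phi d (rot g) 2 1 (M \<Otimes>\<^sub>M M)"
  have "AE w in Phi d (rot g) 2 1 (graph_joining M h). fst w e = snd w e"
    unfolding Phi_graph_joining by (simp add: AE_distr_iff[OF diagonal E])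
  then have "AE w in Phi d (rot g) 2 1 (M \<Otimes>\<^sub>M M). fst w e = snd w e"
    unfolding eq .
  then have "AE z in PiM {1..2::nat} (\<lambda>_. M \<Otimes>\<^sub>M M).
      Dmat d (rot g) 2 1 (\<lambda>i. fst (z i)) e = Dmat d (rot g) 2 1 (\<lambda>i. snd (z i)) e"
    unfolding Phi_def by (simp add: AE_distr_iff[OF measurable_Dmat_pair E])
  then have "AE z in PiM {1..2::nat} (\<lambda>_. M \<Otimes>\<^sub>M M). d (fst (z 1)) (fst (z 2)) = d (snd (z 1)) (snd (z 2))"
    by (simp only: Dmat_e)
  with not_AE_dist_eq_on_independent_pairs assms show False
    by blast
qed

end

lemma invariant_haar_spaceI:
  fixes M :: "'a::{ab_group_add,t2_space} measure"
  assumes "compact_ab_topgroup TYPE('a)" and "haar_probability M" and "translation_invariant d"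
    and "(\<lambda>p. d (fst p) (snd p)) \<in> borel_measurable (M \<Otimes>\<^sub>M M)"
  shows "invariant_haar_space M d"
proof -
  have sets_M: "sets M = sets borel" and "prob_space M" and "\<And>t. distr M M (\<lambda>x. x + t) = M"
    using assms(2) by (auto simp: haar_probability_def)
  moreover have "(\<lambda>x. x + t) \<in> M \<rightarrow>\<^sub>M M" for t
  proof -
    have "continuous_on UNIV (\<lambda>p::'a \<times> 'a. fst p + snd p)"
      using assms(1) by (simp add: compact_ab_topgroup_def)
    then have "continuous_on UNIV (\<lambda>x::'a. fst (x, t) + snd (x, t))"
      by (rule continuous_on_compose2) (auto intro: continuous_intros)
    then have "continuous_on UNIV (\<lambda>x::'a. x + t)"
      by simp
    then show ?thesis
      using borel_measurable_continuous_onI measurable_cong_sets[OF sets_M sets_M] by blast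
  qed
  ultimately show ?thesis
    using assms(3,4) by (simp add: invariant_haar_space_def invariant_haar_space_axioms_def)
qed

theorem proposition21:
  fixes M :: "'a::{ab_group_add,t2_space} measure"
    and d :: "'a \<Rightarrow> 'a \<Rightarrow> real"
    and g :: 'a
  assumes "compact_ab_topgroup TYPE('a)"
    and "haar_probability M"
    and "is_metric d" and "translation_invariant d"
    and "(\<lambda>p. d (fst p) (snd p)) \<in> borel_measurable (M \<Otimes>\<^sub>M M)"
    and "ergodic_map M (rot g)"
  shows "(\<forall>h h'. coord_isomorphic M d (rot g) (graph_joining M h) (graph_joining M h'))
    \<and> (\<forall>h h' n m. n \<ge> 1 \<longrightarrow> m \<ge> 1 \<longrightarrow>
          Phi d (rot g) n m (graph_joining M h) = Phi d (rot g) n m (graph_joining M h'))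
    \<and> ((\<not> (\<exists>c. AE p in M \<Otimes>\<^sub>M M. d (fst p) (snd p) = c)) \<longrightarrow>
          (\<forall>h. Phi d (rot g) 2 1 (graph_joining M h) \<noteq> Phi d (rot g) 2 1 (M \<Otimes>\<^sub>M M)))"
proof -
  interpret invariant_haar_space M d
    using assms(1,2,4,5) by (rule invariant_haar_spaceI)
  show ?thesis
    using coord_isomorphic_graph_joinings Phi_graph_joining_neq_Phi_product
    by (simp add: Phi_graph_joining)
qed

end
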